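(* Let $\Lambda\in\{\mathsf{CS4},\mathsf{IS4},\mathsf{S4I},\mathsf{GS4}\}$ and let $\varphi$ be a formula. (1) If $\Lambda\neq\mathsf{S4I}$ and $\varphi$ is satisfiable (resp. falsifiable) in a shallow $\Lambda$-model, then $\varphi$ is satisfiable (resp. falsifiable) in a $\Lambda$-model with finitely many worlds. (2) If $\Lambda=\mathsf{S4I}$ and $\varphi$ is satisfiable (resp. falsifiable) in a shallow, forest-like $\mathsf{S4I}$-model, then $\varphi$ is satisfiable (resp. falsifiable) in an $\mathsf{S4I}$-model with finitely many worlds.
   Context: Formulas over a countably infinite set $\mathbb P$ of variables: $p\mid\bot\mid\varphi\wedge\psi\mid\varphi\vee\psi\mid\varphi\to\psi\mid\Diamond\varphi\mid\Box\varphi$. A bi-intuitionistic frame is $(W,W_\bot,\preccurlyeq,\sqsubseteq)$ with $\preccurlyeq,\sqsubseteq$ preorders on $W$ and $W_\bot\subseteq W$ upward closed under both; infallible if $W_\bot=\varnothing$. A valuation $V:\mathbb P\to 2^W$ has each $V(p)$ upward closed under $\preccurlyeq$ and containing $W_\bot$; a model is $\mathcal M=(W,W_\bot,\preccurlyeq,\sqsubseteq,V)$. Satisfaction: $p$ iff $w\in V(p)$; $\bot$ iff $w\in W_\bot$; $\wedge,\vee$ pointwise; $w\models\varphi\to\psi$ iff for all $v\succcurlyeq w$, $v\models\varphi$ implies $v\models\psi$; $w\models\Diamond\varphi$ iff for all $u\succcurlyeq w$ there is $v\sqsupseteq u$ with $v\models\varphi$; $w\models\Box\varphi$ iff $v\models\varphi$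 whenever $w\preccurlyeq u\sqsubseteq v$. $\varphi$ is satisfiable (falsifiable) in $\mathcal M$ if $(\mathcal M,w)\models\varphi$ (resp. $\not\models$) for some $w\in W\setminus W_\bot$. $\sqsubseteq$ is forward confluent if $w\preccurlyeq w'$, $w\sqsubseteq v$ imply some $v'$ with $v\preccurlyeq v'$, $w'\sqsubseteq v'$; backward confluent if $w\sqsubseteq v\preccurlyeq v'$ implies some $w'$ with $w\preccurlyeq w'\sqsubseteq v'$; downward confluent if $w\preccurlyeq v\sqsubseteq v'$ implies some $w'$ with $w\sqsubseteq w'\preccurlyeq v'$. Locally linear: $w\preccurlyeq u$, $w\preccurlyeq v$ imply $u\preccurlyeq v$ or $v\preccurlyeq u$. $\mathsf{CS4}$-frames: backward confluent. $\mathsf{IS4}$-frames: infallible, forward and backward confluent. $\mathsf{GS4}$-frames: locally linear $\mathsf{IS4}$-frames. $\mathsf{S4I}$-frames: infallible, forward and downward confluent. A $\Lambda$-model is a model on a $\Lambda$-frame. Write $w\prec v$ if $w\preccurlyeq v$ and $v\not\preccurlyeq w$. The height of $w$ is the supremum of all $n$ for which there is a chain $w=w_0\prec w_1\prec\cdots\prec w_n$; the height of the model is the supremum of the heights of its worlds; the model is shallow if its height is finite. The model is forest-like if for every $w\in W$ the set $\{v\in W: v\preccurlyeq w\}$ is totally ordered by $\preccurlyeq$. *)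

theory Defs
  imports Main "HOL-Library.Extended_Nat"
begin

datatype fm = Var nat | Bot | And fm fm | Or fm fm | Imp fm fm | Dia fm | Box fm

text \<open>Models: worlds W, fallible worlds Wb, intuitionistic preorder le, modal preorder sq, valuation.\<close>
record 'w model =
  worlds :: "'w set"
  fallible :: "'w set"
  leq :: "'w \<Rightarrow> 'w \<Rightarrow> bool"
  sqq :: "'w \<Rightarrow> 'w \<Rightarrow> bool"
  val :: "nat \<Rightarrow> 'w set"

definition preorder_on :: "'w set \<Rightarrow> ('w \<Rightarrow> 'w \<Rightarrow> bool) \<Rightarrow> bool" where
  "preorder_on A R \<longleftrightarrow> (\<forall>x y. R x y \<longrightarrow> x \<in> A \<and> y \<in> A)
     \<and> (\<forall>x\<in>A. R x x) \<and> (\<forall>x\<in>A. \<forall>y\<in>A. \<forall>z\<in>A. R x y \<longrightarrow> R y z \<longrightarrow> R x z)"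

definition up_closed :: "'w set \<Rightarrow> ('w \<Rightarrow> 'w \<Rightarrow> bool) \<Rightarrow> 'w set \<Rightarrow> bool" where
  "up_closed A R U \<longleftrightarrow> (\<forall>x\<in>U. \<forall>y\<in>A. R x y \<longrightarrow> y \<in> U)"

definition is_model :: "'w model \<Rightarrow> bool" where
  "is_model M \<longleftrightarrow>
     preorder_on (worlds M) (leq M) \<and> preorder_on (worlds M) (sqq M) \<and>
     fallible M \<subseteq> worlds M \<and>
     up_closed (worlds M) (leq M) (fallible M) \<and> up_closed (worlds M) (sqq M) (fallible M) \<and>
     (\<forall>p. val M p \<subseteq> worlds M \<and> up_closed (worlds M) (leq M) (val M p) \<and> fallible M \<subseteq> val M p)"

fun sat :: "'w model \<Rightarrow> 'w \<Rightarrow> fm \<Rightarrow> bool" where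
  "sat M w (Var p) \<longleftrightarrow> w \<in> val M p"
| "sat M w Bot \<longleftrightarrow> w \<in> fallible M"
| "sat M w (And a b) \<longleftrightarrow> sat M w a \<and> sat M w b"
| "sat M w (Or a b) \<longleftrightarrow> sat M w a \<or> sat M w b"
| "sat M w (Imp a b) \<longleftrightarrow> (\<forall>v\<in>worlds M. leq M w v \<longrightarrow> sat M v a \<longrightarrow> sat M v b)"
| "sat M w (Dia a) \<longleftrightarrow> (\<forall>u\<in>worlds M. leq M w u \<longrightarrow> (\<exists>v\<in>worlds M. sqq M u v \<and> sat M v a))"
| "sat M w (Box a) \<longleftrightarrow> (\<forall>u\<in>worlds M. \<forall>v\<in>worlds M. leq M w u \<longrightarrow> sqq M u v \<longrightarrow> sat M v a)"

definition satisfiable_in :: "'w model \<Rightarrow> fm \<Rightarrow> bool" where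
  "satisfiable_in M \<phi> \<longleftrightarrow> (\<exists>w \<in> worlds M - fallible M. sat M w \<phi>)"

definition falsifiable_in :: "'w model \<Rightarrow> fm \<Rightarrow> bool" where
  "falsifiable_in M \<phi> \<longleftrightarrow> (\<exists>w \<in> worlds M - fallible M. \<not> sat M w \<phi>)"

definition infallible :: "'w model \<Rightarrow> bool" where
  "infallible M \<longleftrightarrow> fallible M = {}"

definition forward_confluent :: "'w model \<Rightarrow> bool" where
  "forward_confluent M \<longleftrightarrow> (\<forall>w\<in>worlds M. \<forall>w'\<in>worlds M. \<forall>v\<in>worlds M.
     leq M w w' \<longrightarrow> sqq M w v \<longrightarrow> (\<exists>v'\<in>worlds M. leq M v v' \<and> sqq M w' v'))"

definition backward_confluent :: "'w model \<Rightarrow> bool" where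
  "backward_confluent M \<longleftrightarrow> (\<forall>w\<in>worlds M. \<forall>v\<in>worlds M. \<forall>v'\<in>worlds M.
     sqq M w v \<longrightarrow> leq M v v' \<longrightarrow> (\<exists>w'\<in>worlds M. leq M w w' \<and> sqq M w' v'))"

definition downward_confluent :: "'w model \<Rightarrow> bool" where
  "downward_confluent M \<longleftrightarrow> (\<forall>w\<in>worlds M. \<forall>v\<in>worlds M. \<forall>v'\<in>worlds M.
     leq M w v \<longrightarrow> sqq M v v' \<longrightarrow> (\<exists>w'\<in>worlds M. sqq M w w' \<and> leq M w' v'))"

definition locally_linear :: "'w model \<Rightarrow> bool" where
  "locally_linear M \<longleftrightarrow> (\<forall>w\<in>worlds M. \<forall>u\<in>worlds M. \<forall>v\<in>worlds M.
     leq M w u \<longrightarrow> leq M w v \<longrightarrow> leq M u v \<or> leq M v u)"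

datatype logic = CS4 | IS4 | S4I | GS4

fun logic_model :: "logic \<Rightarrow> 'w model \<Rightarrow> bool" where
  "logic_model CS4 M \<longleftrightarrow> is_model M \<and> backward_confluent M"
| "logic_model IS4 M \<longleftrightarrow> is_model M \<and> infallible M \<and> forward_confluent M \<and> backward_confluent M"
| "logic_model GS4 M \<longleftrightarrow> is_model M \<and> infallible M \<and> forward_confluent M \<and> backward_confluent M
                          \<and> locally_linear M"
| "logic_model S4I M \<longleftrightarrow> is_model M \<and> infallible M \<and> forward_confluent M \<and> downward_confluent M"

definition strict_le :: "'w model \<Rightarrow> 'w \<Rightarrow> 'w \<Rightarrow> bool" where
  "strict_le M w v \<longleftrightarrow> leq M w v \<and> \<not> leq M v w"

definition has_chain :: "'w model \<Rightarrow> 'w \<Rightarrow> nat \<Rightarrow> bool" where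
  "has_chain M w n \<longleftrightarrow> (\<exists>f :: nat \<Rightarrow> 'w. f 0 = w \<and> (\<forall>i\<le>n. f i \<in> worlds M)
       \<and> (\<forall>i<n. strict_le M (f i) (f (Suc i))))"

definition world_height :: "'w model \<Rightarrow> 'w \<Rightarrow> enat" where
  "world_height M w = (SUP n \<in> {n. has_chain M w n}. enat n)"

definition model_height :: "'w model \<Rightarrow> enat" where
  "model_height M = (SUP w \<in> worlds M. world_height M w)"

definition shallow :: "'w model \<Rightarrow> bool" where
  "shallow M \<longleftrightarrow> model_height M \<noteq> \<infinity>"

definition forest_like :: "'w model \<Rightarrow> bool" where
  "forest_like M \<longleftrightarrow> (\<forall>w\<in>worlds M. \<forall>u\<in>worlds M. \<forall>v\<in>worlds M.
     leq M u w \<longrightarrow> leq M v w \<longrightarrow> leq M u v \<or> leq M v u)"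

end

theory Submission
  imports Defs
begin

text \<open>Let \<open>S\<close> consist of \<open>\<bottom>\<close> and the subformulas of \<open>\<phi>\<close>. The finite model is a quotient of
  \<open>M\<close> by a map that identifies only worlds with the same label (the formulas of \<open>S\<close> true at
  the world, at all its \<open>\<sqsubseteq>\<close>-successors and at some \<open>\<sqsubseteq>\<close>-successor) and that has the zig
  property for \<open>\<preccurlyeq>\<close>. The quotient carries the image of \<open>\<preccurlyeq>\<close> and the reflexive-transitive
  closure of the image of \<open>\<sqsubseteq>\<close>; box and diamond information propagates along that
  closure, so the quotient satisfies the same formulas of \<open>S\<close> and inherits the frame
  conditions.

  If all \<open>\<prec>\<close>-chains have length at most \<open>n\<close>, bisimilarity for \<open>\<preccurlyeq>\<close> of depth \<open>n + 1\<close>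
  is already stable (a successor either has smaller height or lies in the same cluster), so it
  has the zig property; by induction on the depth it has finitely many classes. For \<open>S4I\<close>
  downward confluence needs the zag property too. In a forest-like model it holds once the
  class of a world is paired with the classes of the worlds below it, provided the bisimulation
  also matches the worlds between a world and its successor.\<close>

context
  fixes M :: "'w model"
  assumes model: "is_model M"
begin

lemma model_leq_worlds: "leq M w v \<Longrightarrow> w \<in> worlds M \<and> v \<in> worlds M"
  using model unfolding is_model_def preorder_on_def by blast

lemma model_sqq_worlds: "sqq M w v \<Longrightarrow> w \<in> worlds M \<and> v \<in> worlds M"
  using model unfolding is_model_def preorder_on_def by blast

lemma model_leq_refl: "w \<in> worlds M \<Longrightarrow> leq M w w"
  using model unfolding is_model_def preorder_on_def by blast

lemma model_sqq_refl: "w \<in> worlds M \<Longrightarrow> sqq M w w"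
  using model unfolding is_model_def preorder_on_def by blast

lemma model_leq_trans: "leq M u w \<Longrightarrow> leq M w v \<Longrightarrow> leq M u v"
  using model model_leq_worlds unfolding is_model_def preorder_on_def by metis

lemma model_sqq_trans: "sqq M u w \<Longrightarrow> sqq M w v \<Longrightarrow> sqq M u v"
  using model model_sqq_worlds unfolding is_model_def preorder_on_def by metis

lemma model_fallible_worlds: "fallible M \<subseteq> worlds M"
  using model unfolding is_model_def by blast

lemma model_fallible_leq: "w \<in> fallible M \<Longrightarrow> leq M w v \<Longrightarrow> v \<in> fallible M"
  using model model_leq_worlds unfolding is_model_def up_closed_def by blast

lemma model_fallible_sqq: "w \<in> fallible M \<Longrightarrow> sqq M w v \<Longrightarrow> v \<in> fallible M"
  using model model_sqq_worlds unfolding is_model_def up_closed_def by blast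

lemma model_val_worlds: "val M p \<subseteq> worlds M"
  using model unfolding is_model_def by blast

lemma model_val_leq: "w \<in> val M p \<Longrightarrow> leq M w v \<Longrightarrow> v \<in> val M p"
  using model model_leq_worlds unfolding is_model_def up_closed_def by blast

lemma model_fallible_val: "fallible M \<subseteq> val M p"
  using model unfolding is_model_def by blast

end

section \<open>Quotients of filtrations\<close>

fun subformulas :: "fm \<Rightarrow> fm set" where
  "subformulas (Var p) = {Var p}"
| "subformulas Bot = {Bot}"
| "subformulas (And a b) = insert (And a b) (subformulas a \<union> subformulas b)"
| "subformulas (Or a b) = insert (Or a b) (subformulas a \<union> subformulas b)"
| "subformulas (Imp a b) = insert (Imp a b) (subformulas a \<union> subformulas b)"
| "subformulas (Dia a) = insert (Dia a) (subformulas a)"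
| "subformulas (Box a) = insert (Box a) (subformulas a)"

lemma subformulas_self [simp]: "\<phi> \<in> subformulas \<phi>"
  by (cases \<phi>) auto

lemma finite_subformulas: "finite (subformulas \<phi>)"
  by (induction \<phi>) auto

lemma subformulas_trans: "\<psi> \<in> subformulas \<phi> \<Longrightarrow> subformulas \<psi> \<subseteq> subformulas \<phi>"
  by (induction \<phi>) auto

locale filtration =
  fixes M :: "'w model" and S :: "fm set"
  assumes model: "is_model M" and finite_S: "finite S" and Bot_in_S: "Bot \<in> S"
    and subformulas_in_S: "\<psi> \<in> S \<Longrightarrow> subformulas \<psi> \<subseteq> S"
begin

definition boxed :: "'w \<Rightarrow> fm \<Rightarrow> bool" where
  "boxed w a \<longleftrightarrow> (\<forall>v\<in>worlds M. sqq M w v \<longrightarrow> sat M v a)"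

definition possible :: "'w \<Rightarrow> fm \<Rightarrow> bool" where
  "possible w a \<longleftrightarrow> (\<exists>v\<in>worlds M. sqq M w v \<and> sat M v a)"

definition label :: "'w \<Rightarrow> fm set \<times> fm set \<times> fm set" where
  "label w = ({a\<in>S. sat M w a}, {a\<in>S. boxed w a}, {a\<in>S. possible w a})"

lemma label_eqD:
  assumes "label w = label v" and "a \<in> S"
  shows "sat M w a \<longleftrightarrow> sat M v a" and "boxed w a \<longleftrightarrow> boxed v a"
    and "possible w a \<longleftrightarrow> possible v a"
  using assms unfolding label_def by (auto simp: set_eq_iff)

lemma finite_label_image: "finite (label ` X)"
proof (rule finite_subset)
  show "label ` X \<subseteq> Pow S \<times> Pow S \<times> Pow S"
    unfolding label_def by auto
qed (use finite_S in simp)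

lemma boxed_sqq: "boxed w a \<Longrightarrow> sqq M w v \<Longrightarrow> boxed v a"
  unfolding boxed_def using model_sqq_trans[OF model] by blast

lemma possible_sqq: "possible v a \<Longrightarrow> sqq M w v \<Longrightarrow> possible w a"
  unfolding possible_def using model_sqq_trans[OF model] by blast

end

locale collapse = filtration M S for M :: "'w model" and S +
  fixes d :: "'w \<Rightarrow> 'q"
  assumes collapse_label: "w \<in> worlds M \<Longrightarrow> v \<in> worlds M \<Longrightarrow> d w = d v \<Longrightarrow> label w = label v"
    and collapse_zig: "w \<in> worlds M \<Longrightarrow> v \<in> worlds M \<Longrightarrow> d w = d v \<Longrightarrow> leq M w x \<Longrightarrow>
      \<exists>y\<in>worlds M. leq M v y \<and> d y = d x"
begin

definition sq_image :: "'q \<Rightarrow> 'q \<Rightarrow> bool" where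
  "sq_image a b \<longleftrightarrow> (\<exists>w\<in>worlds M. \<exists>v\<in>worlds M. d w = a \<and> d v = b \<and> sqq M w v)"

definition quotient_model :: "'q model" where
  "quotient_model = \<lparr>worlds = d ` worlds M, fallible = d ` fallible M,
     leq = (\<lambda>a b. \<exists>w\<in>worlds M. \<exists>v\<in>worlds M. d w = a \<and> d v = b \<and> leq M w v),
     sqq = (\<lambda>a b. a \<in> d ` worlds M \<and> sq_image\<^sup>*\<^sup>* a b),
     val = (\<lambda>p. d ` val M p)\<rparr>"

lemma quotient_model_simps:
  "worlds quotient_model = d ` worlds M"
  "fallible quotient_model = d ` fallible M"
  "leq quotient_model a b \<longleftrightarrow> (\<exists>w\<in>worlds M. \<exists>v\<in>worlds M. d w = a \<and> d v = b \<and> leq M w v)"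
  "sqq quotient_model a b \<longleftrightarrow> a \<in> d ` worlds M \<and> sq_image\<^sup>*\<^sup>* a b"
  "val quotient_model p = d ` val M p"
  unfolding quotient_model_def by simp_all

lemma leq_quotient_iff:
  assumes "w \<in> worlds M"
  shows "leq quotient_model (d w) b \<longleftrightarrow> (\<exists>v\<in>worlds M. leq M w v \<and> d v = b)"
proof
  assume "leq quotient_model (d w) b"
  then obtain w' v' where "w' \<in> worlds M" "v' \<in> worlds M" "d w' = d w" "d v' = b" "leq M w' v'"
    unfolding quotient_model_simps by blast
  then show "\<exists>v\<in>worlds M. leq M w v \<and> d v = b"
    using collapse_zig[of w' w v'] assms by metis
qed (use assms quotient_model_simps(3) in blast)

lemma ball_leq_quotient:
  assumes "w \<in> worlds M"
  shows "(\<forall>c\<in>worlds quotient_model. leq quotient_model (d w) c \<longrightarrow> P c) \<longleftrightarrow>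
    (\<forall>v\<in>worlds M. leq M w v \<longrightarrow> P (d v))"
  using leq_quotient_iff[OF assms] model_leq_worlds[OF model]
  by (auto simp: quotient_model_simps(1))

lemma collapse_sat: "u \<in> worlds M \<Longrightarrow> w \<in> worlds M \<Longrightarrow> d u = d w \<Longrightarrow> a \<in> S \<Longrightarrow> sat M u a \<longleftrightarrow> sat M w a"
  using collapse_label label_eqD(1) by blast

lemma sq_image_worlds: "sq_image a b \<Longrightarrow> a \<in> d ` worlds M \<and> b \<in> d ` worlds M"
  unfolding sq_image_def by blast

lemma sq_image_rtranclp_worlds: "sq_image\<^sup>*\<^sup>* a b \<Longrightarrow> a \<in> d ` worlds M \<Longrightarrow> b \<in> d ` worlds M"
  by (induction rule: rtranclp_induct) (use sq_image_worlds in blast)+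

lemma sq_image_boxed_possible:
  assumes "sq_image\<^sup>*\<^sup>* a b" and "w \<in> worlds M" "d w = a" and "c \<in> S"
  shows "v \<in> worlds M \<Longrightarrow> d v = b \<Longrightarrow> (boxed w c \<longrightarrow> boxed v c) \<and> (possible v c \<longrightarrow> possible w c)"
  using assms(1)
proof (induction arbitrary: v rule: rtranclp_induct)
  case base
  then show ?case using collapse_label[of w v] label_eqD(2,3) assms(2-4) by metis
next
  case (step b' b)
  obtain u u' where u: "u \<in> worlds M" "u' \<in> worlds M" "d u = b'" "d u' = b" "sqq M u u'"
    using step.hyps(2) unfolding sq_image_def by blast
  have "label u' = label v"
    using collapse_label[OF u(2) step.prems(1)] u(4) step.prems(2) by simp
  then show ?case
    using step.IH[OF u(1,3)] boxed_sqq[OF _ u(5)] possible_sqq[OF _ u(5)] label_eqD(2,3) assms(4)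
    by metis
qed

context
  fixes a :: fm and u :: 'w
  assumes a_S: "a \<in> S" and u_worlds: "u \<in> worlds M"
    and sat_a: "\<And>v. v \<in> worlds M \<Longrightarrow> sat quotient_model (d v) a \<longleftrightarrow> sat M v a"
begin

lemma possible_quotient_iff:
  "(\<exists>e\<in>worlds quotient_model. sqq quotient_model (d u) e \<and> sat quotient_model e a) \<longleftrightarrow> possible u a"
proof
  assume "\<exists>e\<in>worlds quotient_model. sqq quotient_model (d u) e \<and> sat quotient_model e a"
  then obtain v where v: "v \<in> worlds M" "sq_image\<^sup>*\<^sup>* (d u) (d v)" "sat M v a"
    using sat_a by (auto simp: quotient_model_simps)
  have "possible v a"
    unfolding possible_def using v model_sqq_refl[OF model] by blast
  then show "possible u a"
    using sq_image_boxed_possible[OF v(2) u_worlds refl a_S v(1) refl] by blast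
next
  assume "possible u a"
  then obtain v where v: "v \<in> worlds M" "sqq M u v" "sat M v a"
    unfolding possible_def by blast
  then have "sq_image (d u) (d v)"
    unfolding sq_image_def using u_worlds by blast
  then show "\<exists>e\<in>worlds quotient_model. sqq quotient_model (d u) e \<and> sat quotient_model e a"
    using u_worlds v sat_a by (auto simp: quotient_model_simps)
qed

lemma boxed_quotient_iff:
  "(\<forall>e\<in>worlds quotient_model. sqq quotient_model (d u) e \<longrightarrow> sat quotient_model e a) \<longleftrightarrow> boxed u a"
proof
  assume H: "\<forall>e\<in>worlds quotient_model. sqq quotient_model (d u) e \<longrightarrow> sat quotient_model e a"
  show "boxed u a"
    unfolding boxed_def
  proof (intro ballI impI)
    fix v assume v: "v \<in> worlds M" "sqq M u v"
    then have "sq_image (d u) (d v)"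
      unfolding sq_image_def using u_worlds by blast
    then show "sat M v a"
      using H u_worlds v sat_a by (auto simp: quotient_model_simps)
  qed
next
  assume "boxed u a"
  show "\<forall>e\<in>worlds quotient_model. sqq quotient_model (d u) e \<longrightarrow> sat quotient_model e a"
  proof (intro ballI impI)
    fix e assume "e \<in> worlds quotient_model" "sqq quotient_model (d u) e"
    then obtain v where v: "v \<in> worlds M" "e = d v" "sq_image\<^sup>*\<^sup>* (d u) (d v)"
      by (auto simp: quotient_model_simps)
    then have "boxed v a"
      using sq_image_boxed_possible[OF v(3) u_worlds refl a_S v(1) refl] \<open>boxed u a\<close> by blast
    then show "sat quotient_model e a"
      unfolding boxed_def using v model_sqq_refl[OF model] sat_a by blast
  qed
qed

end

lemma sat_quotient_iff: "\<psi> \<in> S \<Longrightarrow> w \<in> worlds M \<Longrightarrow> sat quotient_model (d w) \<psi> \<longleftrightarrow> sat M w \<psi>"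
proof (induction \<psi> arbitrary: w)
  case (Var p)
  have "w \<in> val M p" if "u \<in> val M p" "d u = d w" for u
    using collapse_sat[of u w "Var p"] that model_val_worlds[OF model] Var.prems by auto
  then show ?case by (auto simp: quotient_model_simps)
next
  case Bot
  have "w \<in> fallible M" if "u \<in> fallible M" "d u = d w" for u
    using collapse_sat[of u w Bot] that model_fallible_worlds[OF model] Bot.prems by auto
  then show ?case by (auto simp: quotient_model_simps)
next
  case (And a b)
  have "a \<in> S" "b \<in> S" using subformulas_in_S[OF And.prems(1)] by auto
  then show ?case using And.IH And.prems(2) by simp
next
  case (Or a b)
  have "a \<in> S" "b \<in> S" using subformulas_in_S[OF Or.prems(1)] by auto
  then show ?case using Or.IH Or.prems(2) by simp
next
  case (Imp a b)
  have "a \<in> S" "b \<in> S" using subformulas_in_S[OF Imp.prems(1)] by auto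
  note IH = Imp.IH(1)[OF \<open>a \<in> S\<close>] Imp.IH(2)[OF \<open>b \<in> S\<close>]
  show ?case
    using Imp.prems(2) by (simp add: ball_leq_quotient IH)
next
  case (Dia a)
  have "a \<in> S" using subformulas_in_S[OF Dia.prems(1)] by auto
  then show ?case
    using Dia.prems(2) Dia.IH
    by (simp add: ball_leq_quotient possible_quotient_iff possible_def)
next
  case (Box a)
  have "a \<in> S" using subformulas_in_S[OF Box.prems(1)] by auto
  then show ?case
    using Box.prems(2) Box.IH
    by (simp add: ball_leq_quotient boxed_quotient_iff boxed_def)
qed

lemma quotient_satisfiable: "\<phi> \<in> S \<Longrightarrow> satisfiable_in M \<phi> \<Longrightarrow> satisfiable_in quotient_model \<phi>"
  unfolding satisfiable_in_def
  using sat_quotient_iff[of \<phi>] sat_quotient_iff[of Bot] Bot_in_S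
  by (force simp: quotient_model_simps(1))

lemma quotient_falsifiable: "\<phi> \<in> S \<Longrightarrow> falsifiable_in M \<phi> \<Longrightarrow> falsifiable_in quotient_model \<phi>"
  unfolding falsifiable_in_def
  using sat_quotient_iff[of \<phi>] sat_quotient_iff[of Bot] Bot_in_S
  by (force simp: quotient_model_simps(1))

lemma up_closed_quotient_image:
  assumes "U \<subseteq> worlds M" and "\<And>u v. u \<in> U \<Longrightarrow> leq M u v \<Longrightarrow> v \<in> U"
  shows "up_closed (d ` worlds M) (leq quotient_model) (d ` U)"
  unfolding up_closed_def
proof (intro ballI impI)
  fix x y assume "x \<in> d ` U" "leq quotient_model x y"
  then obtain u v where "u \<in> U" "x = d u" "leq M u v" "d v = y"
    using leq_quotient_iff assms(1) by blast
  then show "y \<in> d ` U" using assms(2) by blast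
qed

lemma sq_image_rtranclp_fallible:
  "sq_image\<^sup>*\<^sup>* a b \<Longrightarrow> a \<in> d ` fallible M \<Longrightarrow> b \<in> d ` fallible M"
proof (induction rule: rtranclp_induct)
  case (step b c)
  obtain u v where uv: "u \<in> worlds M" "v \<in> worlds M" "d u = b" "d v = c" "sqq M u v"
    using step.hyps(2) unfolding sq_image_def by blast
  have "sat quotient_model (d u) Bot"
    using step.IH step.prems uv(3) by (simp add: quotient_model_simps)
  then have "u \<in> fallible M"
    using sat_quotient_iff[OF Bot_in_S uv(1)] by simp
  then show ?case using model_fallible_sqq[OF model _ uv(5)] uv(4) by blast
qed

lemma preorder_on_leq_quotient: "preorder_on (worlds quotient_model) (leq quotient_model)"
  unfolding preorder_on_def
proof (intro conjI allI impI ballI)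
  fix x y assume "leq quotient_model x y"
  then show "x \<in> worlds quotient_model" "y \<in> worlds quotient_model"
    by (auto simp: quotient_model_simps)
next
  fix x assume "x \<in> worlds quotient_model"
  then show "leq quotient_model x x"
    using model_leq_refl[OF model] by (auto simp: quotient_model_simps)
next
  fix x y z assume "x \<in> worlds quotient_model" and xy: "leq quotient_model x y"
    and yz: "leq quotient_model y z"
  obtain w where w: "w \<in> worlds M" "x = d w"
    using \<open>x \<in> worlds quotient_model\<close> by (auto simp: quotient_model_simps)
  obtain v where v: "v \<in> worlds M" "leq M w v" "d v = y"
    using leq_quotient_iff[OF w(1)] xy w(2) by blast
  obtain u where "leq M v u" "d u = z"
    using leq_quotient_iff[OF v(1)] yz v(3) by blast
  then show "leq quotient_model x z"
    using leq_quotient_iff[OF w(1)] model_leq_trans[OF model v(2)] model_leq_worlds[OF model] w(2)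
    by blast
qed

lemma preorder_on_sqq_quotient: "preorder_on (worlds quotient_model) (sqq quotient_model)"
  unfolding preorder_on_def
proof (intro conjI allI impI ballI)
  fix x y assume "sqq quotient_model x y"
  then show "x \<in> worlds quotient_model" "y \<in> worlds quotient_model"
    using sq_image_rtranclp_worlds by (auto simp: quotient_model_simps)
next
  fix x y z assume "sqq quotient_model x y" "sqq quotient_model y z"
  then show "sqq quotient_model x z" by (auto simp: quotient_model_simps)
qed (simp add: quotient_model_simps)

lemma is_model_quotient: "is_model quotient_model"
proof -
  have "up_closed (worlds quotient_model) (leq quotient_model) (fallible quotient_model)"
    unfolding quotient_model_simps(1,2)
    by (rule up_closed_quotient_image)
      (use model_fallible_worlds[OF model] model_fallible_leq[OF model] in blast)+
  moreover have "up_closed (worlds quotient_model) (sqq quotient_model) (fallible quotient_model)"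
    unfolding up_closed_def quotient_model_simps(2,4) using sq_image_rtranclp_fallible by blast
  moreover have "up_closed (worlds quotient_model) (leq quotient_model) (val quotient_model p)"
    for p
    unfolding quotient_model_simps(1,5)
    by (rule up_closed_quotient_image)
      (use model_val_worlds[OF model] model_val_leq[OF model] in blast)+
  moreover have "fallible quotient_model \<subseteq> worlds quotient_model"
    using model_fallible_worlds[OF model] by (simp add: quotient_model_simps image_mono)
  moreover have "val quotient_model p \<subseteq> worlds quotient_model" for p
    using model_val_worlds[OF model] by (simp add: quotient_model_simps image_mono)
  moreover have "fallible quotient_model \<subseteq> val quotient_model p" for p
    using model_fallible_val[OF model] by (simp add: quotient_model_simps image_mono)
  ultimately show ?thesis
    using preorder_on_leq_quotient preorder_on_sqq_quotient unfolding is_model_def by blast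
qed

lemma infallible_quotient: "infallible M \<Longrightarrow> infallible quotient_model"
  unfolding infallible_def by (simp add: quotient_model_simps)

lemma locally_linear_quotient:
  assumes "locally_linear M"
  shows "locally_linear quotient_model"
  unfolding locally_linear_def
proof (intro ballI impI)
  fix a b c assume "a \<in> worlds quotient_model" and ab: "leq quotient_model a b"
    and ac: "leq quotient_model a c"
  then obtain w where w: "w \<in> worlds M" "a = d w"
    by (auto simp: quotient_model_simps)
  obtain v u where "leq M w v" "d v = b" "leq M w u" "d u = c"
    using leq_quotient_iff[OF w(1)] ab ac w(2) by blast
  moreover from this have "leq M v u \<or> leq M u v"
    using assms w(1) model_leq_worlds[OF model] unfolding locally_linear_def by blast
  ultimately show "leq quotient_model b c \<or> leq quotient_model c b"
    using model_leq_worlds[OF model] unfolding quotient_model_simps(3) by blast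
qed

lemma backward_confluent_sq_image:
  assumes "backward_confluent M"
  shows "sq_image\<^sup>*\<^sup>* a b \<Longrightarrow> a \<in> worlds quotient_model \<Longrightarrow> leq quotient_model b b' \<Longrightarrow>
    \<exists>a'. leq quotient_model a a' \<and> sqq quotient_model a' b'"
proof (induction arbitrary: b' rule: rtranclp_induct)
  case base
  then have "sqq quotient_model b' b'"
    using model_leq_worlds[OF is_model_quotient] by (auto simp: quotient_model_simps(1,4))
  then show ?case
    using base(2) by blast
next
  case (step c b)
  obtain w v where wv: "w \<in> worlds M" "v \<in> worlds M" "d w = c" "d v = b" "sqq M w v"
    using step.hyps(2) unfolding sq_image_def by blast
  obtain v' where v': "v' \<in> worlds M" "leq M v v'" "d v' = b'"
    using leq_quotient_iff[OF wv(2)] step.prems(2) wv(4) by blast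
  obtain w' where w': "w' \<in> worlds M" "leq M w w'" "sqq M w' v'"
    using assms wv v' unfolding backward_confluent_def by blast
  have "leq quotient_model c (d w')"
    using leq_quotient_iff[OF wv(1)] w' wv(3) by blast
  then obtain a' where a': "leq quotient_model a a'" "sqq quotient_model a' (d w')"
    using step.IH step.prems(1) by blast
  have "sq_image (d w') b'"
    unfolding sq_image_def using w' v' by blast
  then show ?case
    using a' by (auto simp: quotient_model_simps(4))
qed

lemma backward_confluent_quotient:
  assumes "backward_confluent M"
  shows "backward_confluent quotient_model"
  unfolding backward_confluent_def
proof (intro ballI impI)
  fix a b b' assume "a \<in> worlds quotient_model" "b \<in> worlds quotient_model"
    "b' \<in> worlds quotient_model" "sqq quotient_model a b" "leq quotient_model b b'"
  then obtain a' where "leq quotient_model a a'" "sqq quotient_model a' b'"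
    using backward_confluent_sq_image[OF assms] by (metis quotient_model_simps(4))
  then show "\<exists>a'\<in>worlds quotient_model. leq quotient_model a a' \<and> sqq quotient_model a' b'"
    using model_leq_worlds[OF is_model_quotient] by blast
qed

lemma forward_confluent_sq_image:
  assumes "forward_confluent M"
  shows "sq_image\<^sup>*\<^sup>* a b \<Longrightarrow> a \<in> worlds quotient_model \<Longrightarrow> leq quotient_model a a' \<Longrightarrow>
    \<exists>b'. leq quotient_model b b' \<and> sqq quotient_model a' b'"
proof (induction arbitrary: a' rule: converse_rtranclp_induct)
  case base
  then have "sqq quotient_model a' a'"
    using model_leq_worlds[OF is_model_quotient] by (auto simp: quotient_model_simps(1,4))
  then show ?case
    using base(2) by blast
next
  case (step a c)
  obtain w v where wv: "w \<in> worlds M" "v \<in> worlds M" "d w = a" "d v = c" "sqq M w v"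
    using step.hyps(1) unfolding sq_image_def by blast
  obtain w' where w': "w' \<in> worlds M" "leq M w w'" "d w' = a'"
    using leq_quotient_iff[OF wv(1)] step.prems(2) wv(3) by blast
  obtain v' where v': "v' \<in> worlds M" "leq M v v'" "sqq M w' v'"
    using assms wv w' unfolding forward_confluent_def by blast
  have "leq quotient_model c (d v')" "c \<in> worlds quotient_model"
    using leq_quotient_iff[OF wv(2)] v' wv by (auto simp: quotient_model_simps(1))
  then obtain b' where b': "leq quotient_model b b'" "sqq quotient_model (d v') b'"
    using step.IH by blast
  have "sq_image a' (d v')"
    unfolding sq_image_def using w' v' by blast
  then show ?case
    using b' w' by (auto simp: quotient_model_simps(1,4))
qed

lemma forward_confluent_quotient:
  assumes "forward_confluent M"
  shows "forward_confluent quotient_model"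
  unfolding forward_confluent_def
proof (intro ballI impI)
  fix a a' b assume "a \<in> worlds quotient_model" "a' \<in> worlds quotient_model"
    "b \<in> worlds quotient_model" "leq quotient_model a a'" "sqq quotient_model a b"
  then obtain b' where "leq quotient_model b b'" "sqq quotient_model a' b'"
    using forward_confluent_sq_image[OF assms] by (metis quotient_model_simps(4))
  then show "\<exists>b'\<in>worlds quotient_model. leq quotient_model b b' \<and> sqq quotient_model a' b'"
    using model_leq_worlds[OF is_model_quotient] by blast
qed

lemma logic_model_quotient:
  assumes "logic_model L M" and "L \<noteq> S4I"
  shows "logic_model L quotient_model"
  using assms is_model_quotient infallible_quotient backward_confluent_quotient
    forward_confluent_quotient locally_linear_quotient
  by (cases L) simp_all

lemma collapse_comp:
  assumes "inj_on g (d ` worlds M)"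
  shows "collapse M S (g \<circ> d)"
proof unfold_locales
  have eq: "(g \<circ> d) w = (g \<circ> d) v \<longleftrightarrow> d w = d v" if "w \<in> worlds M" "v \<in> worlds M" for w v
    using assms that by (auto simp: inj_on_eq_iff)
  show "label w = label v" if "w \<in> worlds M" "v \<in> worlds M" "(g \<circ> d) w = (g \<circ> d) v" for w v
    using collapse_label eq that by blast
  show "\<exists>y\<in>worlds M. leq M v y \<and> (g \<circ> d) y = (g \<circ> d) x"
    if "w \<in> worlds M" "v \<in> worlds M" "(g \<circ> d) w = (g \<circ> d) v" "leq M w x" for w v x
    using collapse_zig[of w v x] eq that by auto
qed

end

locale collapse_zag = collapse +
  assumes collapse_zag: "w \<in> worlds M \<Longrightarrow> v \<in> worlds M \<Longrightarrow> d w = d v \<Longrightarrow> leq M y w \<Longrightarrow>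
    \<exists>z\<in>worlds M. leq M z v \<and> d z = d y"
begin

lemma downward_confluent_sq_image:
  assumes "downward_confluent M"
  shows "sq_image\<^sup>*\<^sup>* b b' \<Longrightarrow> leq quotient_model a b \<Longrightarrow>
    \<exists>a'. sqq quotient_model a a' \<and> leq quotient_model a' b'"
proof (induction arbitrary: a rule: converse_rtranclp_induct)
  case base
  then show ?case
    by (auto simp: quotient_model_simps(3,4))
next
  case (step b c)
  obtain u u' where uu': "u \<in> worlds M" "u' \<in> worlds M" "d u = b" "d u' = c" "sqq M u u'"
    using step.hyps(1) unfolding sq_image_def by blast
  obtain w v where wv: "w \<in> worlds M" "v \<in> worlds M" "d w = a" "d v = b" "leq M w v"
    using step.prems by (auto simp: quotient_model_simps(3))
  obtain z where z: "z \<in> worlds M" "leq M z u" "d z = d w"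
    using collapse_zag[OF wv(2) uu'(1)] wv(4,5) uu'(3) by metis
  obtain z' where z': "z' \<in> worlds M" "sqq M z z'" "leq M z' u'"
    using assms z uu' unfolding downward_confluent_def by blast
  have "leq quotient_model (d z') c"
    using leq_quotient_iff[OF z'(1)] z' uu'(2,4) by blast
  then obtain a' where a': "sqq quotient_model (d z') a'" "leq quotient_model a' b'"
    using step.IH by blast
  have "sq_image a (d z')"
    unfolding sq_image_def using z z' wv(1,3) by metis
  then have "sqq quotient_model a a'"
    using a'(1) wv(1,3)
    by (auto simp: quotient_model_simps(4) intro: converse_rtranclp_into_rtranclp)
  then show ?case
    using a'(2) by blast
qed

lemma downward_confluent_quotient:
  assumes "downward_confluent M"
  shows "downward_confluent quotient_model"
  unfolding downward_confluent_def
proof (intro ballI impI)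
  fix a b b' assume "a \<in> worlds quotient_model" "b \<in> worlds quotient_model"
    "b' \<in> worlds quotient_model" "leq quotient_model a b" "sqq quotient_model b b'"
  then obtain a' where "sqq quotient_model a a'" "leq quotient_model a' b'"
    using downward_confluent_sq_image[OF assms] by (metis quotient_model_simps(4))
  then show "\<exists>a'\<in>worlds quotient_model. sqq quotient_model a a' \<and> leq quotient_model a' b'"
    using model_leq_worlds[OF is_model_quotient] by blast
qed

lemma logic_model_S4I_quotient: "logic_model S4I M \<Longrightarrow> logic_model S4I quotient_model"
  using is_model_quotient infallible_quotient forward_confluent_quotient downward_confluent_quotient
  by simp

lemma collapse_zag_comp:
  assumes "inj_on g (d ` worlds M)"
  shows "collapse_zag M S (g \<circ> d)"
proof (intro collapse_zag.intro collapse_zag_axioms.intro)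
  show "collapse M S (g \<circ> d)"
    using collapse_comp[OF assms] .
  have eq: "(g \<circ> d) w = (g \<circ> d) v \<longleftrightarrow> d w = d v" if "w \<in> worlds M" "v \<in> worlds M" for w v
    using assms that by (auto simp: inj_on_eq_iff)
  show "\<exists>z\<in>worlds M. leq M z v \<and> (g \<circ> d) z = (g \<circ> d) y"
    if "w \<in> worlds M" "v \<in> worlds M" "(g \<circ> d) w = (g \<circ> d) v" "leq M y w" for w v y
    using collapse_zag[of w v y] eq that model_leq_worlds[OF model] by auto
qed

end

section \<open>Bisimulation in models of bounded height\<close>

lemma finite_image_factor:
  assumes "finite (f ` A)" and "\<And>a b. a \<in> A \<Longrightarrow> b \<in> A \<Longrightarrow> f a = f b \<Longrightarrow> g a = g b"
  shows "finite (g ` A)"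
proof -
  have "g ` A \<subseteq> (\<lambda>c. g (inv_into A f c)) ` (f ` A)"
  proof
    fix z assume "z \<in> g ` A"
    then obtain a where a: "a \<in> A" "z = g a" by blast
    have "inv_into A f (f a) \<in> A" "f (inv_into A f (f a)) = f a"
      using a(1) by (simp_all add: inv_into_into f_inv_into_f)
    then have "g (inv_into A f (f a)) = g a"
      using assms(2) a(1) by blast
    then show "z \<in> (\<lambda>c. g (inv_into A f c)) ` (f ` A)" using a by force
  qed
  then show ?thesis using assms(1) finite_surj by blast
qed

lemma ball_bex_iff_image_subset:
  assumes "\<And>a b. a \<in> A \<Longrightarrow> b \<in> B \<Longrightarrow> R a b \<longleftrightarrow> c a = c b"
  shows "(\<forall>a\<in>A. \<exists>b\<in>B. R a b) \<longleftrightarrow> c ` A \<subseteq> c ` B"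
  using assms by (auto simp: image_subset_iff image_iff)

lemma image_filter_eq:
  assumes "c ` A = c ` B" and "\<And>a b. a \<in> A \<Longrightarrow> b \<in> B \<Longrightarrow> c a = c b \<Longrightarrow> h a = h b"
  shows "c ` {a \<in> A. P (h a)} = c ` {b \<in> B. P (h b)}"
proof -
  have "c a \<in> c ` {b \<in> B. P (h b)}" if "a \<in> A" "P (h a)" for a
  proof -
    have "c a \<in> c ` B" using assms(1) that(1) by blast
    then obtain b where "b \<in> B" "c a = c b" by blast
    then show ?thesis using assms(2) that by force
  qed
  moreover have "c b \<in> c ` {a \<in> A. P (h a)}" if "b \<in> B" "P (h b)" for b
  proof -
    have "c b \<in> c ` A" using assms(1) that(1) by blast
    then obtain a where "a \<in> A" "c b = c a" by blast
    then show ?thesis using assms(2) that by force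
  qed
  ultimately show ?thesis by blast
qed

locale bounded_height = filtration M S for M :: "'w model" and S +
  fixes bound :: nat
  assumes has_chain_bound: "w \<in> worlds M \<Longrightarrow> has_chain M w n \<Longrightarrow> n \<le> bound"
begin

definition height :: "'w \<Rightarrow> nat" where
  "height w = (GREATEST n. has_chain M w n)"

lemma has_chain_0: "w \<in> worlds M \<Longrightarrow> has_chain M w 0"
  unfolding has_chain_def by (rule exI[of _ "\<lambda>_. w"]) simp

lemma has_chain_height: "w \<in> worlds M \<Longrightarrow> has_chain M w (height w)"
  unfolding height_def
  by (rule GreatestI_nat[of _ 0 bound]) (auto intro: has_chain_0 has_chain_bound)

lemma has_chain_le_height: "w \<in> worlds M \<Longrightarrow> has_chain M w n \<Longrightarrow> n \<le> height w"
  unfolding height_def by (rule Greatest_le_nat[of _ _ bound]) (auto intro: has_chain_bound)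

lemma height_le_bound: "w \<in> worlds M \<Longrightarrow> height w \<le> bound"
  using has_chain_height has_chain_bound by blast

lemma has_chain_Suc:
  assumes wx: "leq M w x" "\<not> leq M x w" and c: "has_chain M x n"
  shows "has_chain M w (Suc n)"
proof -
  obtain f where f: "f 0 = x" "\<forall>i\<le>n. f i \<in> worlds M" "\<forall>i<n. strict_le M (f i) (f (Suc i))"
    using c unfolding has_chain_def by blast
  define g where "g i = (if i = 0 then w else f (i - 1))" for i
  have "w \<in> worlds M" using model_leq_worlds[OF model wx(1)] by blast
  then have "\<forall>i\<le>Suc n. g i \<in> worlds M" using f(2) unfolding g_def by auto
  moreover have "\<forall>i<Suc n. strict_le M (g i) (g (Suc i))"
  proof (intro allI impI)
    fix i assume "i < Suc n"
    show "strict_le M (g i) (g (Suc i))"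
    proof (cases i)
      case 0 then show ?thesis using wx f(1) unfolding g_def strict_le_def by simp
    next
      case (Suc j) then show ?thesis using f(3) \<open>i < Suc n\<close> unfolding g_def by simp
    qed
  qed
  moreover have "g 0 = w" unfolding g_def by simp
  ultimately show ?thesis unfolding has_chain_def by blast
qed

lemma has_chain_leq:
  assumes wx: "leq M w x" and c: "has_chain M x n"
  shows "has_chain M w n"
proof -
  obtain f where f: "f 0 = x" "\<forall>i\<le>n. f i \<in> worlds M" "\<forall>i<n. strict_le M (f i) (f (Suc i))"
    using c unfolding has_chain_def by blast
  define g where "g i = (if i = 0 then w else f i)" for i
  have "w \<in> worlds M" using model_leq_worlds[OF model wx] by blast
  then have "\<forall>i\<le>n. g i \<in> worlds M" using f(2) unfolding g_def by auto
  moreover have "\<forall>i<n. strict_le M (g i) (g (Suc i))"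
  proof (intro allI impI)
    fix i assume i: "i < n"
    show "strict_le M (g i) (g (Suc i))"
    proof (cases i)
      case 0
      have s: "leq M x (f 1)" "\<not> leq M (f 1) x" using f(3) i 0 f(1) unfolding strict_le_def by auto
      have "leq M w (f 1)" using model_leq_trans[OF model wx s(1)] .
      moreover have "\<not> leq M (f 1) w" using model_leq_trans[OF model _ wx] s(2) by blast
      ultimately show ?thesis using 0 unfolding g_def strict_le_def by simp
    next
      case (Suc j) then show ?thesis using f(3) i unfolding g_def by simp
    qed
  qed
  moreover have "g 0 = w" unfolding g_def by simp
  ultimately show ?thesis unfolding has_chain_def by blast
qed

lemma height_antimono: "leq M w x \<Longrightarrow> height x \<le> height w"
  using has_chain_le_height has_chain_leq has_chain_height model_leq_worlds[OF model] by meson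

lemma height_strict_antimono: "leq M w x \<Longrightarrow> \<not> leq M x w \<Longrightarrow> height x < height w"
proof -
  assume a: "leq M w x" "\<not> leq M x w"
  have "x \<in> worlds M" "w \<in> worlds M" using model_leq_worlds[OF model a(1)] by auto
  then have "has_chain M w (Suc (height x))" using has_chain_Suc[OF a has_chain_height] by blast
  then show ?thesis using has_chain_le_height \<open>w \<in> worlds M\<close> by fastforce
qed

lemma leq_of_same_height: "leq M w x \<Longrightarrow> height x = height w \<Longrightarrow> leq M x w"
  using height_strict_antimono by fastforce

definition interval :: "'w \<Rightarrow> 'w \<Rightarrow> 'w set" where
  "interval w x = {y \<in> worlds M. leq M w y \<and> leq M y x}"

lemma interval_worlds: "interval w x \<subseteq> worlds M"
  unfolding interval_def by blast

lemma interval_cluster: "leq M w x \<Longrightarrow> leq M x w \<Longrightarrow> interval x z = interval w z"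
  unfolding interval_def using model_leq_trans[OF model] by blast

definition intervals_match :: "('w \<Rightarrow> 'w \<Rightarrow> bool) \<Rightarrow> 'w \<Rightarrow> 'w \<Rightarrow> 'w \<Rightarrow> 'w \<Rightarrow> bool" where
  "intervals_match R w x v y \<longleftrightarrow>
     (\<forall>x'\<in>interval w x. \<exists>y'\<in>interval v y. R x' y') \<and> (\<forall>y'\<in>interval v y. \<exists>x'\<in>interval w x. R x' y')"

text \<open>Matching the intervals, and not only the successors, is needed only for forest-like
  models: it makes the classes below a world invariant under the zig step.\<close>

definition forth :: "('w \<Rightarrow> 'w \<Rightarrow> bool) \<Rightarrow> 'w \<Rightarrow> 'w \<Rightarrow> bool" where
  "forth R w v \<longleftrightarrow>
     (\<forall>x\<in>worlds M. leq M w x \<longrightarrow> (\<exists>y\<in>worlds M. leq M v y \<and> R x y \<and> intervals_match R w x v y))"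

primrec bisim :: "nat \<Rightarrow> 'w \<Rightarrow> 'w \<Rightarrow> bool" where
  "bisim 0 = (\<lambda>w v. label w = label v \<and> height w = height v)"
| "bisim (Suc k) = (\<lambda>w v. bisim k w v \<and> forth (bisim k) w v \<and> forth (bisim k) v w)"

lemma bisim_label: "bisim k w v \<Longrightarrow> label w = label v"
  by (induction k) auto

lemma bisim_height: "bisim k w v \<Longrightarrow> height w = height v"
  by (induction k) auto

lemma bisim_sym: "bisim k w v \<Longrightarrow> bisim k v w"
  by (induction k arbitrary: w v) auto

lemma forth_refl: "(\<And>x. x \<in> worlds M \<Longrightarrow> R x x) \<Longrightarrow> forth R w w"
  unfolding forth_def intervals_match_def interval_def by blast

lemma intervals_match_trans:
  assumes "transp R" and "intervals_match R w x v y" and "intervals_match R v y u z"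
  shows "intervals_match R w x u z"
  unfolding intervals_match_def
proof (intro conjI ballI)
  fix x' assume "x' \<in> interval w x"
  then obtain y' where "y' \<in> interval v y" "R x' y'"
    using assms(2) unfolding intervals_match_def by blast
  moreover from this obtain z' where "z' \<in> interval u z" "R y' z'"
    using assms(3) unfolding intervals_match_def by blast
  ultimately show "\<exists>z'\<in>interval u z. R x' z'"
    using transpD[OF assms(1)] by blast
next
  fix z' assume "z' \<in> interval u z"
  then obtain y' where "y' \<in> interval v y" "R y' z'"
    using assms(3) unfolding intervals_match_def by blast
  moreover from this obtain x' where "x' \<in> interval w x" "R x' y'"
    using assms(2) unfolding intervals_match_def by blast
  ultimately show "\<exists>x'\<in>interval w x. R x' z'"
    using transpD[OF assms(1)] by blast
qed

lemma forth_trans: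
  assumes "transp R" and "forth R w v" and "forth R v u"
  shows "forth R w u"
  unfolding forth_def
proof (intro ballI impI)
  fix x assume "x \<in> worlds M" "leq M w x"
  then obtain y where y: "y \<in> worlds M" "leq M v y" "R x y" "intervals_match R w x v y"
    using assms(2) unfolding forth_def by blast
  then obtain z where z: "z \<in> worlds M" "leq M u z" "R y z" "intervals_match R v y u z"
    using assms(3) unfolding forth_def by blast
  have "R x z" "intervals_match R w x u z"
    using transpD[OF assms(1) y(3) z(3)] intervals_match_trans[OF assms(1) y(4) z(4)] .
  then show "\<exists>z\<in>worlds M. leq M u z \<and> R x z \<and> intervals_match R w x u z"
    using z(1,2) by blast
qed

lemma bisim_refl: "w \<in> worlds M \<Longrightarrow> bisim k w w"
  by (induction k arbitrary: w) (simp_all add: forth_refl)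

lemma bisim_trans: "bisim k w v \<Longrightarrow> bisim k v u \<Longrightarrow> bisim k w u"
proof (induction k arbitrary: w v u)
  case (Suc k)
  have trans: "transp (bisim k)"
    using Suc.IH by (blast intro: transpI)
  have "bisim k w v" "bisim k v u"
    using Suc.prems by simp_all
  then have "bisim k w u"
    by (rule Suc.IH)
  moreover have "forth (bisim k) w u"
    using forth_trans[OF trans, of w v u] Suc.prems by simp
  moreover have "forth (bisim k) u w"
    using forth_trans[OF trans, of u v w] Suc.prems by simp
  ultimately show ?case by simp
qed simp

definition bisim_class :: "nat \<Rightarrow> 'w \<Rightarrow> 'w set" where
  "bisim_class k w = {v \<in> worlds M. bisim k w v}"

lemma bisim_class_eq_iff:
  "w \<in> worlds M \<Longrightarrow> v \<in> worlds M \<Longrightarrow> bisim_class k w = bisim_class k v \<longleftrightarrow> bisim k w v"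
  unfolding bisim_class_def using bisim_refl bisim_sym bisim_trans by blast

lemma intervals_match_iff_image:
  assumes "\<And>a b. a \<in> worlds M \<Longrightarrow> b \<in> worlds M \<Longrightarrow> R a b \<longleftrightarrow> c a = c b"
  shows "intervals_match R w x v y \<longleftrightarrow> c ` interval w x = c ` interval v y"
proof -
  have iff: "R a b \<longleftrightarrow> c a = c b"
    if "a \<in> interval w x \<union> interval v y" "b \<in> interval w x \<union> interval v y" for a b
    using assms that interval_worlds by blast
  have "(\<forall>x'\<in>interval w x. \<exists>y'\<in>interval v y. R x' y') \<longleftrightarrow>
      c ` interval w x \<subseteq> c ` interval v y"
    by (rule ball_bex_iff_image_subset) (use iff in blast)
  moreover have "(\<forall>y'\<in>interval v y. \<exists>x'\<in>interval w x. R x' y') \<longleftrightarrow>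
      c ` interval v y \<subseteq> c ` interval w x"
    by (rule ball_bex_iff_image_subset[where R = "\<lambda>b a. R a b"]) (use iff in auto)
  ultimately show ?thesis
    unfolding intervals_match_def by blast
qed

definition forth_signature :: "nat \<Rightarrow> 'w \<Rightarrow> ('w set \<times> 'w set set) set" where
  "forth_signature k w =
     {(bisim_class k x, bisim_class k ` interval w x) | x. x \<in> worlds M \<and> leq M w x}"

lemma forth_signature_forth:
  assumes "forth_signature k w = forth_signature k v"
  shows "forth (bisim k) w v"
  unfolding forth_def
proof (intro ballI impI)
  fix x assume x: "x \<in> worlds M" "leq M w x"
  then have "(bisim_class k x, bisim_class k ` interval w x) \<in> forth_signature k v"
    using assms unfolding forth_signature_def by blast
  then obtain y where "y \<in> worlds M" "leq M v y" "bisim_class k x = bisim_class k y"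
    "bisim_class k ` interval w x = bisim_class k ` interval v y"
    unfolding forth_signature_def by blast
  then show "\<exists>y\<in>worlds M. leq M v y \<and> bisim k x y \<and> intervals_match (bisim k) w x v y"
    using x bisim_class_eq_iff intervals_match_iff_image[of "bisim k" "bisim_class k"] by metis
qed

lemma finite_bisim_classes: "finite (bisim_class k ` worlds M)"
proof (induction k)
  case 0
  have "(\<lambda>w. (label w, height w)) ` worlds M \<subseteq> label ` worlds M \<times> {..bound}"
    using height_le_bound by auto
  moreover have "finite (label ` worlds M \<times> {..bound})"
    using finite_label_image by blast
  ultimately have "finite ((\<lambda>w. (label w, height w)) ` worlds M)"
    by (rule finite_subset)
  then show ?case
    by (rule finite_image_factor) (simp add: bisim_class_eq_iff)
next
  case (Suc k)
  let ?classes = "bisim_class k ` worlds M"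
  have "(\<lambda>w. (bisim_class k w, forth_signature k w)) ` worlds M \<subseteq>
      ?classes \<times> Pow (?classes \<times> Pow ?classes)"
    unfolding forth_signature_def interval_def by auto
  moreover have "finite (?classes \<times> Pow (?classes \<times> Pow ?classes))"
    using Suc.IH by blast
  ultimately have "finite ((\<lambda>w. (bisim_class k w, forth_signature k w)) ` worlds M)"
    by (rule finite_subset)
  then show ?case
    by (rule finite_image_factor) (simp add: bisim_class_eq_iff forth_signature_forth)
qed

lemma forth_cluster:
  assumes "forth R w v" and "leq M w x" "leq M x w" and "leq M v y" "leq M y v"
  shows "forth R x y"
  unfolding forth_def
proof (intro ballI impI)
  fix z assume z: "z \<in> worlds M" "leq M x z"
  then obtain z' where z': "z' \<in> worlds M" "leq M v z'" "R z z'" "intervals_match R w z v z'"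
    using assms(1) model_leq_trans[OF model assms(2) z(2)] unfolding forth_def by blast
  have "leq M y z'"
    using model_leq_trans[OF model assms(5) z'(2)] .
  moreover have "intervals_match R x z y z'"
    using z'(4) unfolding intervals_match_def interval_cluster[OF assms(2,3)]
      interval_cluster[OF assms(4,5)] .
  ultimately show "\<exists>z'\<in>worlds M. leq M y z' \<and> R z z' \<and> intervals_match R x z y z'"
    using z'(1,3) by blast
qed

lemma forth_mono:
  assumes "forth R w v"
    and "\<And>x y. x \<in> worlds M \<Longrightarrow> y \<in> worlds M \<Longrightarrow> leq M w x \<Longrightarrow> leq M v y \<Longrightarrow> R x y \<Longrightarrow> R' x y"
  shows "forth R' w v"
  using assms unfolding forth_def intervals_match_def interval_def by (smt (verit) mem_Collect_eq)

lemma bisim_Suc_cluster: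
  assumes "bisim (Suc k) w v" and "leq M w x" "leq M x w" and "leq M v y" "leq M y v"
    and "bisim k x y"
  shows "bisim (Suc k) x y"
  using assms forth_cluster[of "bisim k" w v x y] forth_cluster[of "bisim k" v w y x] by simp

lemma bisim_stable:
  "w \<in> worlds M \<Longrightarrow> v \<in> worlds M \<Longrightarrow> height w \<le> k \<Longrightarrow> bisim (Suc k) w v \<Longrightarrow>
    bisim (Suc (Suc k)) w v"
proof (induction "height w" arbitrary: w v k rule: less_induct)
  case less
  have step: "bisim (Suc k) x y"
    if "x \<in> worlds M" "y \<in> worlds M" "leq M w x" "leq M v y" "bisim k x y" for x y
  proof (cases "height x < height w")
    case True
    then obtain k' where "k = Suc k'" "height x \<le> k'"
      using less.prems(3) by (cases k) auto
    then show ?thesis using less.hyps[OF True] that by simp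
  next
    case False
    then have "height x = height w"
      using height_antimono[OF that(3)] by simp
    moreover have "height y = height x" "height v = height w"
      using bisim_height[OF that(5)] bisim_height[OF less.prems(4)] by simp_all
    ultimately have "leq M x w" "leq M y v"
      using leq_of_same_height that(3,4) by simp_all
    then show ?thesis using bisim_Suc_cluster less.prems(4) that by blast
  qed
  have "forth (bisim (Suc k)) w v"
    using forth_mono[of "bisim k" w v] less.prems(4) step by simp
  moreover have "forth (bisim (Suc k)) v w"
    using forth_mono[of "bisim k" v w] less.prems(4) step bisim_sym by simp
  ultimately show ?case using less.prems(4) by simp
qed

definition sim :: "'w \<Rightarrow> 'w \<Rightarrow> bool" where
  "sim = bisim (Suc bound)"

definition sim_class :: "'w \<Rightarrow> 'w set" where
  "sim_class = bisim_class (Suc bound)"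

lemma sim_forth:
  assumes "w \<in> worlds M" "v \<in> worlds M" "sim w v" and "leq M w x"
  shows "\<exists>y\<in>worlds M. leq M v y \<and> sim x y \<and> intervals_match sim w x v y"
proof -
  have "bisim (Suc (Suc bound)) w v"
    using bisim_stable[OF assms(1,2) height_le_bound[OF assms(1)]] assms(3) unfolding sim_def .
  then have "forth sim w v"
    unfolding sim_def bisim.simps(2)[of "Suc bound"] by blast
  then show ?thesis
    using assms(4) model_leq_worlds[OF model] unfolding forth_def by blast
qed

lemma sim_class_eq_iff: "w \<in> worlds M \<Longrightarrow> v \<in> worlds M \<Longrightarrow> sim_class w = sim_class v \<longleftrightarrow> sim w v"
  unfolding sim_class_def sim_def by (rule bisim_class_eq_iff)

lemma finite_sim_classes: "finite (sim_class ` worlds M)"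
  unfolding sim_class_def using finite_bisim_classes .

lemma sim_class_label: "w \<in> worlds M \<Longrightarrow> v \<in> worlds M \<Longrightarrow> sim_class w = sim_class v \<Longrightarrow> label w = label v"
  using sim_class_eq_iff bisim_label unfolding sim_def by blast

lemma sim_class_height:
  "w \<in> worlds M \<Longrightarrow> v \<in> worlds M \<Longrightarrow> sim_class w = sim_class v \<Longrightarrow> height w = height v"
  using sim_class_eq_iff bisim_height unfolding sim_def by blast

lemma collapse_sim_class: "collapse M S sim_class"
proof unfold_locales
  show "label w = label v" if "w \<in> worlds M" "v \<in> worlds M" "sim_class w = sim_class v" for w v
    using sim_class_label that .
  show "\<exists>y\<in>worlds M. leq M v y \<and> sim_class y = sim_class x"
    if "w \<in> worlds M" "v \<in> worlds M" "sim_class w = sim_class v" "leq M w x" for w v x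
    using sim_forth[of w v x] sim_class_eq_iff that model_leq_worlds[OF model] by metis
qed

subsection \<open>Forest-like models\<close>

definition below :: "'w \<Rightarrow> 'w set" where
  "below w = {y \<in> worlds M. leq M y w}"

definition sim_class_below :: "'w \<Rightarrow> 'w set \<times> 'w set set" where
  "sim_class_below w = (sim_class w, sim_class ` below w)"

lemma finite_sim_class_below: "finite (sim_class_below ` worlds M)"
proof -
  have "sim_class_below ` worlds M \<subseteq> sim_class ` worlds M \<times> Pow (sim_class ` worlds M)"
    unfolding sim_class_below_def below_def by auto
  moreover have "finite (sim_class ` worlds M \<times> Pow (sim_class ` worlds M))"
    using finite_sim_classes by blast
  ultimately show ?thesis
    by (rule finite_subset)
qed

lemma below_split:
  assumes "forest_like M" and "leq M w x"
  shows "below x = below w \<union> interval w x"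
proof -
  have "leq M y w \<or> leq M w y" if "y \<in> worlds M" "leq M y x" for y
    using assms that model_leq_worlds[OF model] unfolding forest_like_def by blast
  then show ?thesis
    using assms(2) model_leq_trans[OF model] unfolding below_def interval_def by blast
qed

lemma below_height:
  assumes "forest_like M" and "leq M y w"
  shows "below y = {y' \<in> below w. height y \<le> height y'}"
proof (intro equalityI subsetI)
  fix y' assume "y' \<in> below y"
  then show "y' \<in> {y' \<in> below w. height y \<le> height y'}"
    using assms(2) model_leq_trans[OF model] height_antimono unfolding below_def by blast
next
  fix y' assume y': "y' \<in> {y' \<in> below w. height y \<le> height y'}"
  then have "leq M y' y \<or> leq M y y'"
    using assms model_leq_worlds[OF model] unfolding forest_like_def below_def by blast
  then have "leq M y' y"
    using y' height_antimono leq_of_same_height by fastforce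
  then show "y' \<in> below y"
    using y' unfolding below_def by blast
qed

lemma sim_class_below_zig:
  assumes "forest_like M" and "w \<in> worlds M" "v \<in> worlds M" "sim_class_below w = sim_class_below v"
    and "leq M w x"
  shows "\<exists>y\<in>worlds M. leq M v y \<and> sim_class_below y = sim_class_below x"
proof -
  have "sim w v"
    using assms(2-4) sim_class_eq_iff unfolding sim_class_below_def by simp
  then obtain y where y: "y \<in> worlds M" "leq M v y" "sim x y" "intervals_match sim w x v y"
    using sim_forth assms(2,3,5) by blast
  have "x \<in> worlds M"
    using model_leq_worlds[OF model assms(5)] by blast
  then have "sim_class y = sim_class x"
    using y(1,3) sim_class_eq_iff by metis
  moreover have "sim_class ` interval w x = sim_class ` interval v y"
    using y(4) intervals_match_iff_image[of sim sim_class] sim_class_eq_iff by metis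
  then have "sim_class ` below y = sim_class ` below x"
    using below_split[OF assms(1,5)] below_split[OF assms(1) y(2)] assms(4)
    unfolding sim_class_below_def by (simp add: image_Un)
  ultimately show ?thesis
    using y(1,2) unfolding sim_class_below_def by auto
qed

lemma sim_class_below_zag:
  assumes "forest_like M" and "w \<in> worlds M" "v \<in> worlds M" "sim_class_below w = sim_class_below v"
    and "leq M y w"
  shows "\<exists>z\<in>worlds M. leq M z v \<and> sim_class_below z = sim_class_below y"
proof -
  have classes: "sim_class ` below w = sim_class ` below v"
    using assms(4) unfolding sim_class_below_def by simp
  have "y \<in> below w"
    using assms(5) model_leq_worlds[OF model] unfolding below_def by blast
  then have "sim_class y \<in> sim_class ` below v"
    using classes by blast
  then obtain z where z: "z \<in> worlds M" "leq M z v" "sim_class y = sim_class z"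
    unfolding below_def by blast
  have "height z = height y"
    using sim_class_height z model_leq_worlds[OF model assms(5)] by metis
  moreover have "height a = height b"
    if "a \<in> below w" "b \<in> below v" "sim_class a = sim_class b" for a b
    using that sim_class_height unfolding below_def by blast
  ultimately have "sim_class ` below y = sim_class ` below z"
    using below_height[OF assms(1,5)] below_height[OF assms(1) z(2)]
      image_filter_eq[OF classes, of height "\<lambda>n. height y \<le> n"] by simp
  then show ?thesis
    using z unfolding sim_class_below_def by auto
qed

lemma collapse_zag_sim_class_below:
  assumes "forest_like M"
  shows "collapse_zag M S sim_class_below"
proof unfold_locales
  show "label w = label v"
    if "w \<in> worlds M" "v \<in> worlds M" "sim_class_below w = sim_class_below v" for w v
    using that sim_class_label[of w v] by (simp add: sim_class_below_def)
  show "\<exists>y\<in>worlds M. leq M v y \<and> sim_class_below y = sim_class_below x"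
    if "w \<in> worlds M" "v \<in> worlds M" "sim_class_below w = sim_class_below v" "leq M w x" for w v x
    using sim_class_below_zig[OF assms that] .
  show "\<exists>z\<in>worlds M. leq M z v \<and> sim_class_below z = sim_class_below y"
    if "w \<in> worlds M" "v \<in> worlds M" "sim_class_below w = sim_class_below v" "leq M y w" for w v y
    using sim_class_below_zag[OF assms that] .
qed

end

lemma filtration_subformulas:
  assumes "is_model M"
  shows "filtration M (insert Bot (subformulas \<phi>))"
proof
  show "subformulas \<psi> \<subseteq> insert Bot (subformulas \<phi>)" if "\<psi> \<in> insert Bot (subformulas \<phi>)" for \<psi>
    using that subformulas_trans by auto
qed (simp_all add: assms finite_subformulas)

lemma shallow_has_chain_bound:
  assumes "shallow M"
  obtains b where "\<And>w n. w \<in> worlds M \<Longrightarrow> has_chain M w n \<Longrightarrow> n \<le> b"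
proof -
  obtain b where b: "model_height M = enat b"
    using assms unfolding shallow_def by (cases "model_height M") auto
  have "n \<le> b" if "w \<in> worlds M" "has_chain M w n" for w n
  proof -
    have "enat n \<le> world_height M w"
      unfolding world_height_def using that(2) by (intro SUP_upper) simp
    also have "\<dots> \<le> model_height M"
      unfolding model_height_def using that(1) by (intro SUP_upper)
    finally show ?thesis using b by simp
  qed
  then show thesis using that by blast
qed

lemma bounded_height_subformulas:
  assumes "is_model M" and "shallow M"
  obtains b where "bounded_height M (insert Bot (subformulas \<phi>)) b"
  using shallow_has_chain_bound[OF assms(2)] filtration_subformulas[OF assms(1)]
  by (metis bounded_height.intro bounded_height_axioms.intro)

lemma logic_model_is_model: "logic_model L M \<Longrightarrow> is_model M"
  by (cases L) auto

theorem shallow_finite_model_property: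
  fixes M :: "'w model"
  assumes "L \<noteq> S4I" and "logic_model L M" and "shallow M"
  shows "\<exists>N :: nat model. logic_model L N \<and> finite (worlds N) \<and>
    (satisfiable_in M \<phi> \<longrightarrow> satisfiable_in N \<phi>) \<and> (falsifiable_in M \<phi> \<longrightarrow> falsifiable_in N \<phi>)"
proof -
  let ?S = "insert Bot (subformulas \<phi>)"
  obtain b where "bounded_height M ?S b"
    using bounded_height_subformulas logic_model_is_model assms(2,3) by blast
  then interpret bounded_height M ?S b .
  obtain g :: "'w set \<Rightarrow> nat" where g: "inj_on g (sim_class ` worlds M)"
    using finite_imp_inj_to_nat_seg[OF finite_sim_classes] by blast
  interpret Q: collapse M ?S "g \<circ> sim_class"
    using collapse.collapse_comp[OF collapse_sim_class g] .
  have "finite (worlds Q.quotient_model)"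
    unfolding Q.quotient_model_simps image_comp[symmetric]
    using finite_sim_classes by (rule finite_imageI)
  then show ?thesis
    using Q.logic_model_quotient[OF assms(2,1)] Q.quotient_satisfiable Q.quotient_falsifiable
    by auto
qed

theorem shallow_forest_like_S4I_finite_model_property:
  fixes M :: "'w model"
  assumes "logic_model S4I M" and "shallow M" and "forest_like M"
  shows "\<exists>N :: nat model. logic_model S4I N \<and> finite (worlds N) \<and>
    (satisfiable_in M \<phi> \<longrightarrow> satisfiable_in N \<phi>) \<and> (falsifiable_in M \<phi> \<longrightarrow> falsifiable_in N \<phi>)"
proof -
  let ?S = "insert Bot (subformulas \<phi>)"
  obtain b where "bounded_height M ?S b"
    using bounded_height_subformulas logic_model_is_model assms(1,2) by blast
  then interpret bounded_height M ?S b .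
  obtain g :: "'w set \<times> 'w set set \<Rightarrow> nat" where g: "inj_on g (sim_class_below ` worlds M)"
    using finite_imp_inj_to_nat_seg[OF finite_sim_class_below] by blast
  interpret Q: collapse_zag M ?S "g \<circ> sim_class_below"
    using collapse_zag.collapse_zag_comp[OF collapse_zag_sim_class_below[OF assms(3)] g] .
  have "finite (worlds Q.quotient_model)"
    unfolding Q.quotient_model_simps image_comp[symmetric]
    using finite_sim_class_below by (rule finite_imageI)
  then show ?thesis
    using Q.logic_model_S4I_quotient[OF assms(1)] Q.quotient_satisfiable Q.quotient_falsifiable
    by auto
qed

theorem mainTheorem5:
  fixes L :: logic and \<phi> :: fm and M :: "'w model"
  shows
   "(L \<noteq> S4I \<and> logic_model L M \<and> shallow M \<longrightarrow>
       (satisfiable_in M \<phi> \<longrightarrow>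
          (\<exists>N :: nat model. logic_model L N \<and> finite (worlds N) \<and> satisfiable_in N \<phi>)) \<and>
       (falsifiable_in M \<phi> \<longrightarrow>
          (\<exists>N :: nat model. logic_model L N \<and> finite (worlds N) \<and> falsifiable_in N \<phi>)))
    \<and>
    (L = S4I \<and> logic_model S4I M \<and> shallow M \<and> forest_like M \<longrightarrow>
       (satisfiable_in M \<phi> \<longrightarrow>
          (\<exists>N :: nat model. logic_model S4I N \<and> finite (worlds N) \<and> satisfiable_in N \<phi>)) \<and>
       (falsifiable_in M \<phi> \<longrightarrow>
          (\<exists>N :: nat model. logic_model S4I N \<and> finite (worlds N) \<and> falsifiable_in N \<phi>)))"
  using shallow_finite_model_property[of L M \<phi>]
    shallow_forest_like_S4I_finite_model_property[of M \<phi>]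
  by blast

end
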